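(* Let $G$ be a torsion abelian group with $G=H+K$ for subgroups $H,K\leq G$, and let $\varphi\colon G\to G$ be an endomorphism with $\varphi H\subseteq H$ and $\varphi K\subseteq K$. If the restrictions $\varphi|_H\colon H\to H$ and $\varphi|_K\colon K\to K$ are positively expansive endomorphisms, then $\varphi$ is positively expansive. Analogously, if $\varphi$ is an automorphism whose restrictions $\varphi|_H$ and $\varphi|_K$ are expansive automorphisms of $H$ and $K$, then $\varphi$ is an expansive automorphism.
   Context: $\mathbb N=\{0,1,2,\dots\}$. An endomorphism $\varphi$ of an abelian group $G$ is positively expansive if there is a finite subgroup $S\leq G$ such that for every finite subgroup $F\leq G$ there is $n\in\mathbb N$ with $F\subseteq\sum_{k=0}^n\varphi^kS$. An automorphism $\varphi$ is expansive if there is a finite subgroup $S\leq G$ such that for every finite subgroup $F\leq G$ there is $n\in\mathbb N$ with $F\subseteq\sum_{|k|\leq n}\varphi^kS$. *)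

theory Defs
  imports Main
begin

text \<open>Abelian groups are realised as subgroups (carrier sets) of an ambient
  type of class ab_group_add; the whole group G is the ambient type (UNIV).\<close>

definition subgrp :: "'a::ab_group_add set \<Rightarrow> bool" where
  "subgrp A \<longleftrightarrow> 0 \<in> A \<and> (\<forall>x\<in>A. \<forall>y\<in>A. x + y \<in> A) \<and> (\<forall>x\<in>A. - x \<in> A)"

definition torsion_group :: "'a::ab_group_add set \<Rightarrow> bool" where
  "torsion_group A \<longleftrightarrow> (\<forall>x\<in>A. \<exists>n::nat. n > 0 \<and> (\<Sum>i<n. x) = 0)"

definition endo_on :: "'a::ab_group_add set \<Rightarrow> ('a \<Rightarrow> 'a) \<Rightarrow> bool" where
  "endo_on A f \<longleftrightarrow> f ` A \<subseteq> A \<and> (\<forall>x\<in>A. \<forall>y\<in>A. f (x + y) = f x + f y)"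

definition auto_on :: "'a::ab_group_add set \<Rightarrow> ('a \<Rightarrow> 'a) \<Rightarrow> bool" where
  "auto_on A f \<longleftrightarrow> endo_on A f \<and> bij_betw f A A"

definition ipow :: "'a set \<Rightarrow> ('a \<Rightarrow> 'a) \<Rightarrow> int \<Rightarrow> 'a \<Rightarrow> 'a" where
  "ipow A f k = (if k \<ge> 0 then f ^^ nat k else inv_into A f ^^ nat (- k))"

definition pos_orbit_sum :: "('a::ab_group_add \<Rightarrow> 'a) \<Rightarrow> 'a set \<Rightarrow> nat \<Rightarrow> 'a set" where
  "pos_orbit_sum f S n = {(\<Sum>k\<le>n. s k) | s. \<forall>k\<le>n. s k \<in> (f ^^ k) ` S}"

definition orbit_sum :: "'a::ab_group_add set \<Rightarrow> ('a \<Rightarrow> 'a) \<Rightarrow> 'a set \<Rightarrow> nat \<Rightarrow> 'a set" where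
  "orbit_sum A f S n = {(\<Sum>k\<in>{- int n..int n}. s k) | s. \<forall>k\<in>{- int n..int n}. s k \<in> ipow A f k ` S}"

definition pos_expansive :: "'a::ab_group_add set \<Rightarrow> ('a \<Rightarrow> 'a) \<Rightarrow> bool" where
  "pos_expansive A f \<longleftrightarrow> endo_on A f \<and>
     (\<exists>S. subgrp S \<and> finite S \<and> S \<subseteq> A \<and>
        (\<forall>F. subgrp F \<and> finite F \<and> F \<subseteq> A \<longrightarrow> (\<exists>n. F \<subseteq> pos_orbit_sum f S n)))"

definition expansive :: "'a::ab_group_add set \<Rightarrow> ('a \<Rightarrow> 'a) \<Rightarrow> bool" where
  "expansive A f \<longleftrightarrow> auto_on A f \<and>
     (\<exists>S. subgrp S \<and> finite S \<and> S \<subseteq> A \<and>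
        (\<forall>F. subgrp F \<and> finite F \<and> F \<subseteq> A \<longrightarrow> (\<exists>n. F \<subseteq> orbit_sum A f S n)))"

end

theory Submission
  imports Defs "HOL-Library.Set_Algebras"
begin

text \<open>In a torsion group every finite subset of a subgroup lies in a finite subgroup of it, since
  finitely many finite cyclic groups generate a finite group. So a finite subgroup F of H + K lies
  in E_H + E_K for finite subgroups E_H \<le> H and E_K \<le> K. If S_H and S_K witness
  expansivity of \<phi> on H and K, then E_H and E_K lie in orbit sums of S_H and S_K over one common
  range of exponents (orbit sums grow with the range, as every summand contains 0), and since the
  powers of \<phi> are additive, the sum of these two orbit sums is the orbit sum of S_H + S_K. Hence
  S_H + S_K witnesses expansivity on H + K. For automorphisms one also uses that the inverse of
  \<phi> restricted to H is the restriction of the inverse of \<phi>.\<close>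

section \<open>Finite subgroups of torsion groups\<close>

definition nat_mul :: "nat \<Rightarrow> 'a::comm_monoid_add \<Rightarrow> 'a" where
  "nat_mul n x = (\<Sum>i<n. x)"

lemma nat_mul_0 [simp]: "nat_mul 0 x = 0"
  and nat_mul_Suc: "nat_mul (Suc n) x = nat_mul n x + x"
  and nat_mul_zero_right [simp]: "nat_mul n 0 = 0"
  by (simp_all add: nat_mul_def)

lemma nat_mul_1 [simp]: "nat_mul 1 x = x"
  using nat_mul_Suc[of 0 x] by simp

lemma nat_mul_add: "nat_mul (m + n) x = nat_mul m x + nat_mul n x"
  by (induction n) (simp_all add: nat_mul_Suc add.assoc)

lemma nat_mul_mult: "nat_mul (m * n) x = nat_mul m (nat_mul n x)"
  by (induction m) (simp_all add: nat_mul_Suc nat_mul_add add.commute)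

lemma nat_mul_closed:
  assumes "0 \<in> A" "\<And>x y. x \<in> A \<Longrightarrow> y \<in> A \<Longrightarrow> x + y \<in> A" "x \<in> A"
  shows "nat_mul n x \<in> A"
  by (induction n) (simp_all add: nat_mul_Suc assms)

lemma torsion_group_subset: "torsion_group A \<Longrightarrow> B \<subseteq> A \<Longrightarrow> torsion_group B"
  unfolding torsion_group_def by blast

lemma torsion_group_submonoid_is_subgrp:
  assumes tor: "torsion_group A" and zero: "0 \<in> A"
    and add: "\<And>x y. x \<in> A \<Longrightarrow> y \<in> A \<Longrightarrow> x + y \<in> A"
  shows "subgrp A"
  unfolding subgrp_def
proof (intro conjI ballI zero add)
  fix x assume x: "x \<in> A"
  then obtain n where "n > 0" "nat_mul n x = 0"
    using tor by (auto simp: torsion_group_def nat_mul_def)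
  then have "- x = nat_mul (n - 1) x"
    using nat_mul_Suc[of "n - 1" x] by (simp add: neg_eq_iff_add_eq_0 add.commute)
  then show "- x \<in> A" using nat_mul_closed[OF zero add x] by simp
qed

lemma finite_multiples:
  assumes "n > 0" "nat_mul n x = 0"
  shows "finite (range (\<lambda>m. nat_mul m x))"
proof -
  have "nat_mul m x = nat_mul (m mod n) x" for m
  proof -
    have "nat_mul m x = nat_mul ((m div n) * n) x + nat_mul (m mod n) x"
      by (metis div_mult_mod_eq nat_mul_add)
    then show ?thesis using assms(2) by (simp add: nat_mul_mult)
  qed
  then have "range (\<lambda>m. nat_mul m x) = (\<lambda>m. nat_mul m x) ` {..<n}"
    using assms(1) by (auto intro: image_eqI[of _ _ "_ mod n"])
  then show ?thesis by simp
qed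

lemma finite_cyclic_subgrp:
  assumes "torsion_group H" "subgrp H" "x \<in> H"
  shows "\<exists>C. subgrp C \<and> finite C \<and> x \<in> C \<and> C \<subseteq> H"
proof (intro exI conjI)
  let ?C = "range (\<lambda>m. nat_mul m x)"
  show "?C \<subseteq> H"
    using assms(2,3) nat_mul_closed[of H x] by (auto simp: subgrp_def)
  then show "subgrp ?C"
    by (intro torsion_group_submonoid_is_subgrp torsion_group_subset[OF assms(1)])
      (auto intro: range_eqI[of _ _ 0] simp flip: nat_mul_add)
  show "finite ?C"
    using assms(1,3) finite_multiples by (auto simp: torsion_group_def nat_mul_def)
  show "x \<in> ?C" by (metis nat_mul_1 rangeI)
qed

lemma subgrp_set_plus:
  assumes A: "subgrp A" and B: "subgrp B"
  shows "subgrp (A + B)"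
  unfolding subgrp_def
proof (intro conjI ballI)
  show "0 \<in> A + B"
    using set_plus_intro[of 0 A 0 B] A B by (simp add: subgrp_def)
next
  fix x y assume "x \<in> A + B" "y \<in> A + B"
  then obtain a b a' b' where ab: "a \<in> A" "b \<in> B" "a' \<in> A" "b' \<in> B"
    and "x = a + b" "y = a' + b'"
    by (auto elim!: set_plus_elim)
  then have "x + y = (a + a') + (b + b')" by (simp add: ac_simps)
  with ab A B show "x + y \<in> A + B"
    by (simp add: subgrp_def set_plus_intro)
next
  fix x assume "x \<in> A + B"
  then obtain a b where ab: "a \<in> A" "b \<in> B" and "x = a + b"
    by (auto elim!: set_plus_elim)
  then have "- x = - a + - b" by simp
  with ab A B show "- x \<in> A + B"
    by (simp only: subgrp_def set_plus_intro)
qed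

lemma set_plus_upper:
  fixes A B :: "'a::comm_monoid_add set"
  shows "0 \<in> B \<Longrightarrow> A \<subseteq> A + B" and "0 \<in> A \<Longrightarrow> B \<subseteq> A + B"
  using set_zero_plus2[of B A] set_zero_plus2[of A B] by (simp_all add: add.commute)

lemma subgrp_set_plus_subset: "subgrp H \<Longrightarrow> A \<subseteq> H \<Longrightarrow> B \<subseteq> H \<Longrightarrow> A + B \<subseteq> H"
  unfolding subgrp_def set_plus_def by blast

lemma finite_subset_in_finite_subgrp:
  assumes tor: "torsion_group H" and H: "subgrp H"
  shows "finite B \<Longrightarrow> B \<subseteq> H \<Longrightarrow> \<exists>E. subgrp E \<and> finite E \<and> B \<subseteq> E \<and> E \<subseteq> H"
proof (induction B rule: finite_induct)
  case empty
  have "subgrp {0}" by (simp add: subgrp_def)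
  with H show ?case by (intro exI[of _ "{0}"]) (auto simp: subgrp_def)
next
  case (insert x B)
  then obtain E where E: "subgrp E" "finite E" "B \<subseteq> E" "E \<subseteq> H" by auto
  obtain C where C: "subgrp C" "finite C" "x \<in> C" "C \<subseteq> H"
    using finite_cyclic_subgrp[OF tor H] insert.prems by blast
  have "0 \<in> E" "0 \<in> C" using E(1) C(1) by (simp_all add: subgrp_def)
  then have "E \<subseteq> E + C" "C \<subseteq> E + C" using set_plus_upper by blast+
  then have "insert x B \<subseteq> E + C"
    using E(3) C(3) by blast
  then show ?case
    using E C by (intro exI[of _ "E + C"])
      (simp add: subgrp_set_plus finite_set_plus subgrp_set_plus_subset[OF H])
qed

lemma finite_subset_set_plus:
  "finite F \<Longrightarrow> F \<subseteq> A + B \<Longrightarrow> \<exists>A' B'. finite A' \<and> A' \<subseteq> A \<and> finite B' \<and> B' \<subseteq> B \<and> F \<subseteq> A' + B'"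
proof (induction F rule: finite_induct)
  case empty
  then show ?case by blast
next
  case (insert x F)
  then obtain A' B' where AB: "finite A'" "A' \<subseteq> A" "finite B'" "B' \<subseteq> B" "F \<subseteq> A' + B'"
    by auto
  obtain a b where "a \<in> A" "b \<in> B" "x = a + b"
    using insert.prems by (auto elim: set_plus_elim)
  then have "insert x F \<subseteq> insert a A' + insert b B'"
    using AB(5) set_plus_mono2[of A' "insert a A'" B' "insert b B'"] by blast
  with AB \<open>a \<in> A\<close> \<open>b \<in> B\<close> show ?case by blast
qed

lemma finite_subset_in_sum_of_finite_subgrps:
  assumes "torsion_group H" "subgrp H" "torsion_group K" "subgrp K"
    and "finite F" "F \<subseteq> H + K"
  obtains EH EK where "subgrp EH" "finite EH" "EH \<subseteq> H" "subgrp EK" "finite EK" "EK \<subseteq> K"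
    and "F \<subseteq> EH + EK"
proof -
  obtain A B where AB: "finite A" "A \<subseteq> H" "finite B" "B \<subseteq> K" "F \<subseteq> A + B"
    using finite_subset_set_plus[OF assms(5,6)] by blast
  obtain EH where EH: "subgrp EH" "finite EH" "A \<subseteq> EH" "EH \<subseteq> H"
    using finite_subset_in_finite_subgrp[OF assms(1,2) AB(1,2)] by blast
  obtain EK where EK: "subgrp EK" "finite EK" "B \<subseteq> EK" "EK \<subseteq> K"
    using finite_subset_in_finite_subgrp[OF assms(3,4) AB(3,4)] by blast
  have "F \<subseteq> EH + EK" using AB(5) set_plus_mono2[OF EH(3) EK(3)] by blast
  with EH EK that show ?thesis by blast
qed

section \<open>Sumsets and endomorphisms\<close>

lemma zero_in_set_sum: "(\<And>i. i \<in> I \<Longrightarrow> 0 \<in> A i) \<Longrightarrow> 0 \<in> sum A I"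
proof (induction I rule: infinite_finite_induct)
  case (insert x F)
  then show ?case by (metis add_0 insertI1 insertI2 set_plus_intro sum.insert)
qed simp_all

lemma set_sum_mono_index:
  assumes "finite J" "I \<subseteq> J" "\<And>i. i \<in> J \<Longrightarrow> 0 \<in> A i"
  shows "sum A I \<subseteq> sum A J"
proof -
  have "0 \<in> sum A (J - I)" using assms(3) by (intro zero_in_set_sum) auto
  then have "sum A I \<subseteq> sum A (J - I) + sum A I" by (rule set_zero_plus2)
  also have "\<dots> = sum A J" by (rule sum.subset_diff[OF assms(2,1), symmetric])
  finally show ?thesis .
qed

lemma endo_on_zero: "endo_on A g \<Longrightarrow> 0 \<in> A \<Longrightarrow> g 0 = 0"
  unfolding endo_on_def by (metis add_0 add_cancel_right_right)

lemma endo_on_image_set_plus: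
  assumes "endo_on A g" "B \<subseteq> A" "C \<subseteq> A"
  shows "g ` (B + C) = g ` B + g ` C"
proof -
  have hom: "g (b + c) = g b + g c" if "b \<in> B" "c \<in> C" for b c
    using assms that unfolding endo_on_def by blast
  show ?thesis
  proof (intro equalityI subsetI)
    fix y assume "y \<in> g ` (B + C)"
    then obtain b c where "b \<in> B" "c \<in> C" "y = g (b + c)" by (auto elim!: set_plus_elim)
    then show "y \<in> g ` B + g ` C" by (simp add: hom set_plus_intro)
  next
    fix y assume "y \<in> g ` B + g ` C"
    then obtain b c where "b \<in> B" "c \<in> C" "y = g b + g c" by (auto elim!: set_plus_elim)
    then show "y \<in> g ` (B + C)" by (metis hom image_eqI set_plus_intro)
  qed
qed

lemma endo_on_funpow: "endo_on A g \<Longrightarrow> endo_on A (g ^^ n)"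
  by (induction n) (auto simp: endo_on_def image_subset_iff)

lemma endo_on_inv_into:
  assumes A: "subgrp A" and f: "auto_on A f"
  shows "endo_on A (inv_into A f)"
proof -
  have inj: "inj_on f A" and onto: "f ` A = A" and hom: "\<And>x y. x \<in> A \<Longrightarrow> y \<in> A \<Longrightarrow> f (x + y) = f x + f y"
    using f by (auto simp: auto_on_def endo_on_def bij_betw_def)
  have inv_in: "inv_into A f x \<in> A" and f_inv: "f (inv_into A f x) = x" if "x \<in> A" for x
    using that onto by (metis inv_into_into, metis f_inv_into_f)
  have "inv_into A f (x + y) = inv_into A f x + inv_into A f y" if "x \<in> A" "y \<in> A" for x y
  proof (rule inv_into_f_eq[OF inj])
    show "inv_into A f x + inv_into A f y \<in> A"
      using A inv_in that by (simp add: subgrp_def)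
    show "f (inv_into A f x + inv_into A f y) = x + y"
      using hom inv_in f_inv that by simp
  qed
  with inv_in show ?thesis
    unfolding endo_on_def by blast
qed

lemma endo_on_ipow:
  assumes "subgrp A" "auto_on A f"
  shows "endo_on A (ipow A f k)"
proof -
  have "endo_on A f" using assms(2) by (simp add: auto_on_def)
  with endo_on_inv_into[OF assms] show ?thesis
    unfolding ipow_def by (simp add: endo_on_funpow)
qed

lemma funpow_eq_on_invariant:
  assumes "g ` A \<subseteq> A" "\<And>x. x \<in> A \<Longrightarrow> g x = h x"
  shows "x \<in> A \<Longrightarrow> (g ^^ n) x = (h ^^ n) x"
proof (induction n arbitrary: x)
  case (Suc n)
  then have "g x \<in> A" using assms(1) by blast
  then show ?case
    using Suc.IH[of "g x"] assms(2)[OF Suc.prems] by (simp add: funpow_Suc_right del: funpow.simps)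
qed simp

lemma ipow_subgrp_eq:
  assumes A: "auto_on A f" and B: "auto_on B f" and "B \<subseteq> A" "x \<in> B"
  shows "ipow B f k x = ipow A f k x"
proof -
  have injA: "inj_on f A" and ontoB: "f ` B = B"
    using A B by (simp_all add: auto_on_def bij_betw_def)
  have inv_in: "inv_into B f y \<in> B" if "y \<in> B" for y
    using that ontoB by (metis inv_into_into)
  have inv_eq: "inv_into B f y = inv_into A f y" if "y \<in> B" for y
  proof (rule inv_into_f_eq[OF injA, symmetric])
    show "inv_into B f y \<in> A" using inv_in that \<open>B \<subseteq> A\<close> by blast
    show "f (inv_into B f y) = y" using that ontoB by (metis f_inv_into_f)
  qed
  have "(inv_into B f ^^ n) x = (inv_into A f ^^ n) x" for n
    by (rule funpow_eq_on_invariant[OF _ inv_eq \<open>x \<in> B\<close>]) (use inv_in in blast)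
  then show ?thesis
    unfolding ipow_def by simp
qed

section \<open>Orbit sums covering finite subgroups\<close>

definition covers_finite_subgrps :: "(nat \<Rightarrow> 'i set) \<Rightarrow> ('i \<Rightarrow> 'a::ab_group_add \<Rightarrow> 'a) \<Rightarrow> 'a set \<Rightarrow> 'a set \<Rightarrow> bool" where
  "covers_finite_subgrps I g S A \<longleftrightarrow>
     (\<forall>F. subgrp F \<and> finite F \<and> F \<subseteq> A \<longrightarrow> (\<exists>n. F \<subseteq> (\<Sum>k\<in>I n. g k ` S)))"

lemma covers_finite_subgrps_cong:
  assumes "\<And>k x. x \<in> S \<Longrightarrow> g k x = g' k x"
  shows "covers_finite_subgrps I g S A = covers_finite_subgrps I g' S A"
proof -
  have "(\<Sum>k\<in>N. g k ` S) = (\<Sum>k\<in>N. g' k ` S)" for N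
    using assms by (auto intro!: sum.cong image_cong)
  then show ?thesis by (simp add: covers_finite_subgrps_def)
qed

lemma pos_expansive_iff:
  "pos_expansive A f \<longleftrightarrow> endo_on A f \<and>
     (\<exists>S. subgrp S \<and> finite S \<and> S \<subseteq> A \<and> covers_finite_subgrps (\<lambda>n. {..n}) (\<lambda>k. f ^^ k) S A)"
  unfolding pos_expansive_def covers_finite_subgrps_def pos_orbit_sum_def
  by (simp add: set_sum_alt Ball_def)

lemma expansive_iff:
  "expansive A f \<longleftrightarrow> auto_on A f \<and>
     (\<exists>S. subgrp S \<and> finite S \<and> S \<subseteq> A \<and> covers_finite_subgrps (\<lambda>n. {- int n..int n}) (ipow A f) S A)"
  unfolding expansive_def covers_finite_subgrps_def orbit_sum_def
  by (simp add: set_sum_alt)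

lemma covers_finite_subgrps_set_plus:
  assumes H: "torsion_group H" "subgrp H" and K: "torsion_group K" "subgrp K"
    and I: "mono I" "\<And>n. finite (I n)"
    and g: "\<And>k. endo_on (H + K) (g k)"
    and SH: "subgrp SH" "SH \<subseteq> H" "covers_finite_subgrps I g SH H"
    and SK: "subgrp SK" "SK \<subseteq> K" "covers_finite_subgrps I g SK K"
  shows "covers_finite_subgrps I g (SH + SK) (H + K)"
  unfolding covers_finite_subgrps_def
proof (intro allI impI)
  fix F assume "subgrp F \<and> finite F \<and> F \<subseteq> H + K"
  then have F: "finite F" "F \<subseteq> H + K" by simp_all
  have "0 \<in> H" "0 \<in> K" using H(2) K(2) by (simp_all add: subgrp_def)
  then have HK: "H \<subseteq> H + K" "K \<subseteq> H + K" "0 \<in> H + K"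
    using set_plus_upper set_plus_intro[of 0 H 0 K] by simp_all
  obtain EH EK where E: "subgrp EH" "finite EH" "EH \<subseteq> H" "subgrp EK" "finite EK" "EK \<subseteq> K"
    and F_sub: "F \<subseteq> EH + EK"
    using finite_subset_in_sum_of_finite_subgrps[OF H K F] .
  obtain nH where nH: "EH \<subseteq> (\<Sum>k\<in>I nH. g k ` SH)"
    using SH(3) E(1-3) unfolding covers_finite_subgrps_def by blast
  obtain nK where nK: "EK \<subseteq> (\<Sum>k\<in>I nK. g k ` SK)"
    using SK(3) E(4-6) unfolding covers_finite_subgrps_def by blast
  define n where "n = max nH nK"
  have grow: "(\<Sum>k\<in>I m. g k ` S) \<subseteq> (\<Sum>k\<in>I n. g k ` S)"
    if "m \<le> n" "subgrp S" for m S
  proof (rule set_sum_mono_index[OF I(2)])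
    show "I m \<subseteq> I n" using I(1) that(1) by (rule monoD)
    have "0 \<in> S" using that(2) by (simp add: subgrp_def)
    then show "0 \<in> g k ` S" for k
      using endo_on_zero[OF g HK(3)] by (metis image_eqI)
  qed
  have "F \<subseteq> (\<Sum>k\<in>I n. g k ` SH) + (\<Sum>k\<in>I n. g k ` SK)"
    using F_sub nH nK grow[OF _ SH(1), of nH] grow[OF _ SK(1), of nK]
    unfolding n_def by (meson max.cobounded1 max.cobounded2 order_trans set_plus_mono2)
  also have "\<dots> = (\<Sum>k\<in>I n. g k ` SH + g k ` SK)"
    by (rule sum.distrib[symmetric])
  also have "\<dots> = (\<Sum>k\<in>I n. g k ` (SH + SK))"
  proof (rule sum.cong[OF refl])
    show "g k ` SH + g k ` SK = g k ` (SH + SK)" for k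
      using endo_on_image_set_plus[OF g] SH(2) SK(2) HK(1,2) by (metis order_trans)
  qed
  finally show "\<exists>n. F \<subseteq> (\<Sum>k\<in>I n. g k ` (SH + SK))" ..
qed

lemma pos_expansive_set_plus:
  assumes H: "torsion_group H" "subgrp H" and K: "torsion_group K" "subgrp K"
    and endo: "endo_on (H + K) f" and "pos_expansive H f" "pos_expansive K f"
  shows "pos_expansive (H + K) f"
proof -
  obtain SH SK where SH: "subgrp SH" "finite SH" "SH \<subseteq> H"
      "covers_finite_subgrps (\<lambda>n. {..n}) (\<lambda>k. f ^^ k) SH H"
    and SK: "subgrp SK" "finite SK" "SK \<subseteq> K"
      "covers_finite_subgrps (\<lambda>n. {..n}) (\<lambda>k. f ^^ k) SK K"
    using assms(6,7) unfolding pos_expansive_iff by blast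
  have "covers_finite_subgrps (\<lambda>n. {..n}) (\<lambda>k. f ^^ k) (SH + SK) (H + K)"
    by (rule covers_finite_subgrps_set_plus[OF H K _ _ _ SH(1,3,4) SK(1,3,4)])
      (auto simp: mono_def endo_on_funpow[OF endo])
  moreover have "subgrp (SH + SK)" "finite (SH + SK)" "SH + SK \<subseteq> H + K"
    using SH SK by (simp_all add: subgrp_set_plus finite_set_plus set_plus_mono2)
  ultimately show ?thesis
    unfolding pos_expansive_iff using endo by blast
qed

lemma expansive_set_plus:
  assumes H: "torsion_group H" "subgrp H" and K: "torsion_group K" "subgrp K"
    and aut: "auto_on (H + K) f" and "expansive H f" "expansive K f"
  shows "expansive (H + K) f"
proof -
  let ?I = "\<lambda>n. {- int n..int n}"
  have "0 \<in> H" "0 \<in> K" using H(2) K(2) by (simp_all add: subgrp_def)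
  then have HK: "subgrp (H + K)" "H \<subseteq> H + K" "K \<subseteq> H + K"
    using subgrp_set_plus[OF H(2) K(2)] set_plus_upper by blast+
  obtain SH SK where SH: "subgrp SH" "finite SH" "SH \<subseteq> H" "covers_finite_subgrps ?I (ipow H f) SH H"
    and SK: "subgrp SK" "finite SK" "SK \<subseteq> K" "covers_finite_subgrps ?I (ipow K f) SK K"
    and aut_H: "auto_on H f" and aut_K: "auto_on K f"
    using assms(6,7) unfolding expansive_iff by blast
  have "covers_finite_subgrps ?I (ipow (H + K) f) SH H"
    using SH(3,4) ipow_subgrp_eq[OF aut aut_H HK(2)]
    by (subst covers_finite_subgrps_cong[symmetric]) auto
  moreover have "covers_finite_subgrps ?I (ipow (H + K) f) SK K"
    using SK(3,4) ipow_subgrp_eq[OF aut aut_K HK(3)]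
    by (subst covers_finite_subgrps_cong[symmetric]) auto
  ultimately have "covers_finite_subgrps ?I (ipow (H + K) f) (SH + SK) (H + K)"
    using SH(1,3) SK(1,3)
    by (intro covers_finite_subgrps_set_plus[OF H K])
      (auto simp: mono_def endo_on_ipow[OF HK(1) aut])
  moreover have "subgrp (SH + SK)" "finite (SH + SK)" "SH + SK \<subseteq> H + K"
    using SH SK by (simp_all add: subgrp_set_plus finite_set_plus set_plus_mono2)
  ultimately show ?thesis
    unfolding expansive_iff using aut by blast
qed

theorem proposition2p8:
  fixes H K :: "'a::ab_group_add set" and \<phi> :: "'a \<Rightarrow> 'a"
  assumes "torsion_group (UNIV :: 'a set)"
    and "subgrp H" and "subgrp K"
    and "{h + k | h k. h \<in> H \<and> k \<in> K} = UNIV"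
    and "\<phi> ` H \<subseteq> H" and "\<phi> ` K \<subseteq> K"
  shows "(endo_on UNIV \<phi> \<and> pos_expansive H \<phi> \<and> pos_expansive K \<phi> \<longrightarrow> pos_expansive UNIV \<phi>)
       \<and> (auto_on UNIV \<phi> \<and> expansive H \<phi> \<and> expansive K \<phi> \<longrightarrow> expansive UNIV \<phi>)"
proof -
  \<comment> \<open>The invariance of H and K is part of (positive) expansivity of the restrictions.\<close>
  have HK: "H + K = UNIV"
    using assms(4) unfolding set_plus_def by blast
  have "torsion_group H" "torsion_group K"
    using torsion_group_subset[OF assms(1)] by simp_all
  with assms(2,3) show ?thesis
    using pos_expansive_set_plus[of H K \<phi>] expansive_set_plus[of H K \<phi>] unfolding HK by blast
qed

end
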